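(* Let $n\in\mathbb{N}$ and let $\boldsymbol{V}$ be a finite E-subspace of $\boldsymbol{Y}_n$. For every weak $n$-coloring on $\boldsymbol{V}$ there is a finite sequence $\boldsymbol{V}_0,\dots,\boldsymbol{V}_k$ of Esakia spaces such that: (i) $\boldsymbol{V}_0=\boldsymbol{V}$ and each $\boldsymbol{V}_{i+1}$ is obtained by applying a $\beta$-reduction $f_i\colon \boldsymbol{V}_i\to\boldsymbol{V}_{i+1}$ to $\boldsymbol{V}_i$; (ii) the kernel $\mathrm{Ker}(f_{k-1}\circ\cdots\circ f_0)$ does not identify any pair of elements of $\boldsymbol{V}$ of distinct color; (iii) for every $m\in\mathbb{N}$ such that $y_{m,0},\dots,y_{m,2^{n+1}-1}\in V$, there are $i<j$ such that $\langle y_{m,i},y_{m,j}\rangle\in\mathrm{Ker}(f_{k-1}\circ\cdots\circ f_0)$.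
   Context: $\mathbb{N}=\{0,1,2,\dots\}$. For $n\in\mathbb{N}$ let $P_n=\{y_{m,i}: m,i\in\mathbb{N},\ i\le 2^{n+1}-1\}$ (pairwise distinct elements) and define $y_{m,i}\prec y_{m-1,j}$ whenever $m\ge1$ and $i\ne j$ (and no other relations). $\boldsymbol{Y}_n$ is the root compactification of $P_n$ ordered by the reflexive transitive closure of $\prec$: a new least element $\bot$ is added and $U$ is declared open iff $\bot\notin U$ or $U$ is cofinite; it is an Esakia space. An E-subspace of an Esakia space is a closed upset with induced topology and order; finite ones are finite posets with the discrete topology. $\{0,1\}^n$ is ordered componentwise ($\{0,1\}^0$ has a single element). A weak $n$-coloring of a finite poset $\boldsymbol{V}$ is an order-preserving map $\boldsymbol{V}\to\{0,1\}^n$; the value at $x$ is the color of $x$. If $x\ne y$ are elements of a finite poset $\boldsymbol{W}$ with exactly the same immediate successors (an immediate successor of $x$ is a $z>x$ with nothing strictly between), the $\beta$-reduction identifying $x$ and $y$ is the quotient map from $\boldsymbol{W}$ to $\boldsymbol{W}/R$, where $R$ is the smallest equivalence relation identifying $x$ and $y$, and $\boldsymbol{W}/R$ is ordered by $u/R\sqsubseteq v/R$ iff $u'\le v'$ for some $u'\in u/R$, $v'\in v/R$. $\mathrm{Ker}(g)=\{\langle u,v\rangle: g(u)=g(v)\}$; for $k=0$ the composition is the identity. *)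

theory Defs
  imports Main
begin

(* Elements of Y_n: the new least element Bot and y_{m,i} = Y m i *)
datatype yelt = Bot | Y nat nat

definition bnd :: "nat \<Rightarrow> nat" where
  "bnd n = 2 ^ (n + 1) - 1"

definition P :: "nat \<Rightarrow> yelt set" where
  "P n = {Y m i | m i. i \<le> bnd n}"

definition Ycar :: "nat \<Rightarrow> yelt set" where
  "Ycar n = insert Bot (P n)"

definition prec :: "nat \<Rightarrow> yelt \<Rightarrow> yelt \<Rightarrow> bool" where
  "prec n a b \<longleftrightarrow> (\<exists>m i j. m \<ge> 1 \<and> i \<le> bnd n \<and> j \<le> bnd n \<and> i \<noteq> j
        \<and> a = Y m i \<and> b = Y (m - 1) j)"

definition leY :: "nat \<Rightarrow> yelt \<Rightarrow> yelt \<Rightarrow> bool" where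
  "leY n a b \<longleftrightarrow> (a = Bot \<and> b \<in> Ycar n) \<or> (a \<in> P n \<and> b \<in> P n \<and> (prec n)\<^sup>*\<^sup>* a b)"

(* topology of the root compactification *)
definition openY :: "nat \<Rightarrow> yelt set \<Rightarrow> bool" where
  "openY n U \<longleftrightarrow> U \<subseteq> Ycar n \<and> (Bot \<notin> U \<or> finite (Ycar n - U))"

definition closedY :: "nat \<Rightarrow> yelt set \<Rightarrow> bool" where
  "closedY n C \<longleftrightarrow> C \<subseteq> Ycar n \<and> openY n (Ycar n - C)"

definition E_subspace :: "nat \<Rightarrow> yelt set \<Rightarrow> bool" where
  "E_subspace n V \<longleftrightarrow> closedY n V \<and> (\<forall>x\<in>V. \<forall>y\<in>Ycar n. leY n x y \<longrightarrow> y \<in> V)"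

(* {0,1}^n as bool lists of length n, ordered componentwise *)
definition weak_coloring :: "nat \<Rightarrow> yelt set \<Rightarrow> (yelt \<Rightarrow> bool list) \<Rightarrow> bool" where
  "weak_coloring n V c \<longleftrightarrow> (\<forall>v\<in>V. length (c v) = n) \<and>
     (\<forall>u\<in>V. \<forall>v\<in>V. leY n u v \<longrightarrow> list_all2 (\<le>) (c u) (c v))"

(* finite posets whose elements are blocks (sets) of elements of V; a poset is a carrier
   together with its order *)
type_synonym 'a fposet = "'a set set \<times> ('a set \<Rightarrow> 'a set \<Rightarrow> bool)"

definition imm_succ :: "'a fposet \<Rightarrow> 'a set \<Rightarrow> 'a set \<Rightarrow> bool" where
  "imm_succ W x z \<longleftrightarrow> z \<in> fst W \<and> snd W x z \<and> x \<noteq> z \<and>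
     \<not> (\<exists>w\<in>fst W. snd W x w \<and> snd W w z \<and> w \<noteq> x \<and> w \<noteq> z)"

(* The quotient W/R is represented by replacing each R-class by the union of its
   members (a bijective renaming of the classes); the class {x,y} becomes x \<union> y. *)
definition beta_step :: "'a fposet \<Rightarrow> 'a fposet \<Rightarrow> ('a set \<Rightarrow> 'a set) \<Rightarrow> bool" where
  "beta_step W W' f \<longleftrightarrow> (\<exists>x\<in>fst W. \<exists>y\<in>fst W. x \<noteq> y \<and>
      (\<forall>z. imm_succ W x z \<longleftrightarrow> imm_succ W y z) \<and>
      f = (\<lambda>B. if B = x \<or> B = y then x \<union> y else B) \<and>
      fst W' = f ` fst W \<and>
      snd W' = (\<lambda>P Q. \<exists>u\<in>fst W. \<exists>v\<in>fst W. f u = P \<and> f v = Q \<and> snd W u v))"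

definition initial :: "nat \<Rightarrow> yelt set \<Rightarrow> yelt fposet" where
  "initial n V = ((\<lambda>v. {v}) ` V, (\<lambda>A B. \<exists>a\<in>A. \<exists>b\<in>B. leY n a b))"

(* f_{k-1} \<circ> ... \<circ> f_0 for fs = [f_0, ..., f_{k-1}]; identity when k = 0 *)
definition compose_all :: "('a \<Rightarrow> 'a) list \<Rightarrow> 'a \<Rightarrow> 'a" where
  "compose_all fs = fold (\<lambda>f g. f \<circ> g) fs id"

end

(* Level m of Y_n consists of y_{m,0}, ..., y_{m,2^(n+1)-1}, and y_{m+1,i} < y_{m,j} exactly when
   i ~= j; a finite E-subspace V is an upset, so its full levels form an initial segment 0..M.

   Every index is active at level 0, and an index is active at level m+1 if it is active at level m
   and its color there is shared by another active index. Let A_m be the set of admissible colors: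
   all of {0,1}^n for m = 0, otherwise the colors below every color of level m-1. On a full level the
   active elements have colors in A_m, and 2 |A_m| <= #active indices: the indices that stop being
   active have pairwise distinct colors avoiding a repeated one (which exists by pigeonhole), so fewer
   than |A_m| of them leave; and if one leaves, two active colors differ at a bit b, every color in
   A_{m+1} has b off and switching b on stays in A_m, so A_{m+1} has at most half the size of A_m.
   Hence on every full level two distinct active indices share a color.

   The beta-reductions merge equally colored active elements of each full level, level by level from
   the top. Once the levels above m+1 carry their final blocks, the immediate successors of the block of
   an active y_{m+1,i} are exactly the blocks of level m, since the block of y_{m,i} contains an equally
   colored y_{m,j} with j ~= i, which lies above y_{m+1,i}. So two blocks of the same final class on
   level m+1 have the same immediate successors and can be identified. *)

theory Submission
  imports Defs
begin

section \<open>Levels of Y_n\<close>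

fun level :: "yelt \<Rightarrow> nat" where
  "level Bot = 0"
| "level (Y m i) = m"

lemma Suc_bnd: "Suc (bnd n) = 2 * 2 ^ n"
  unfolding bnd_def by simp

lemma one_le_bnd: "1 \<le> bnd n"
  using Suc_bnd[of n] one_le_power[of "2::nat" n] by linarith

lemma Y_in_P_iff [simp]: "Y m i \<in> P n \<longleftrightarrow> i \<le> bnd n"
  by (auto simp: P_def)

lemma Bot_notin_P [simp]: "Bot \<notin> P n"
  by (auto simp: P_def)

lemma precE:
  assumes "prec n a b"
  obtains m i j where "a = Y (Suc m) i" "b = Y m j" "i \<le> bnd n" "j \<le> bnd n" "i \<noteq> j"
  using assms unfolding prec_def by (metis Suc_diff_1 less_eq_Suc_le One_nat_def)

lemma prec_Suc_iff: "prec n (Y (Suc m) i) (Y m j) \<longleftrightarrow> i \<le> bnd n \<and> j \<le> bnd n \<and> i \<noteq> j"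
  unfolding prec_def by force

lemma rtranclp_prec_level: "(prec n)\<^sup>*\<^sup>* a b \<Longrightarrow> a = b \<or> level b < level a"
proof (induction rule: rtranclp_induct)
  case (step b d)
  then show ?case by (elim precE) auto
qed simp

lemma leY_Y_iff: "leY n (Y m i) b \<longleftrightarrow> i \<le> bnd n \<and> b \<in> P n \<and> (prec n)\<^sup>*\<^sup>* (Y m i) b"
  by (auto simp: leY_def)

lemma leY_level: "leY n a b \<Longrightarrow> a \<noteq> Bot \<Longrightarrow> a = b \<or> level b < level a"
  using rtranclp_prec_level[of n a b] by (cases a) (auto simp: leY_Y_iff)

lemma leY_Suc_iff: "leY n (Y (Suc m) i) (Y m j) \<longleftrightarrow> i \<le> bnd n \<and> j \<le> bnd n \<and> i \<noteq> j"
proof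
  assume "leY n (Y (Suc m) i) (Y m j)"
  then have "(prec n)\<^sup>*\<^sup>* (Y (Suc m) i) (Y m j)" and "i \<le> bnd n" "j \<le> bnd n"
    by (auto simp: leY_Y_iff)
  then show "i \<le> bnd n \<and> j \<le> bnd n \<and> i \<noteq> j"
  proof (cases rule: converse_rtranclpE)
    case (step z)
    from step(1) obtain k where "z = Y m k" "i \<noteq> k" by (auto elim: precE)
    with step(2) rtranclp_prec_level[of n z "Y m j"] \<open>i \<le> bnd n\<close> \<open>j \<le> bnd n\<close> show ?thesis by auto
  qed simp
next
  assume "i \<le> bnd n \<and> j \<le> bnd n \<and> i \<noteq> j"
  then show "leY n (Y (Suc m) i) (Y m j)"
    using prec_Suc_iff[of n m i j] by (auto simp: leY_Y_iff)
qed

lemma leY_through_level: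
  assumes "leY n (Y (Suc m) i) b" and "level b < m"
  obtains k where "leY n (Y (Suc m) i) (Y m k)" and "leY n (Y m k) b"
proof -
  have "(prec n)\<^sup>*\<^sup>* (Y (Suc m) i) b" and "i \<le> bnd n" "b \<in> P n"
    using assms(1) by (auto simp: leY_Y_iff)
  then show ?thesis
  proof (cases rule: converse_rtranclpE)
    case (step z)
    from step(1) obtain k where "z = Y m k" "k \<le> bnd n" by (auto elim: precE)
    with step that \<open>i \<le> bnd n\<close> \<open>b \<in> P n\<close> show ?thesis by (auto simp: leY_Y_iff)
  qed (use assms(2) in auto)
qed

section \<open>Merging blocks of a finite poset\<close>

definition block_order :: "('a \<Rightarrow> 'a \<Rightarrow> bool) \<Rightarrow> 'a fposet \<Rightarrow> bool" where
  "block_order le W \<longleftrightarrow> (\<forall>A\<in>fst W. \<forall>B\<in>fst W. snd W A B \<longleftrightarrow> (\<exists>a\<in>A. \<exists>b\<in>B. le a b))"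

lemma block_orderD:
  "block_order le W \<Longrightarrow> A \<in> fst W \<Longrightarrow> B \<in> fst W \<Longrightarrow> snd W A B \<longleftrightarrow> (\<exists>a\<in>A. \<exists>b\<in>B. le a b)"
  unfolding block_order_def by blast

definition merge_blocks :: "'a set \<Rightarrow> 'a set \<Rightarrow> 'a set \<Rightarrow> 'a set" where
  "merge_blocks x y B = (if B = x \<or> B = y then x \<union> y else B)"

definition merge_poset :: "'a fposet \<Rightarrow> 'a set \<Rightarrow> 'a set \<Rightarrow> 'a fposet" where
  "merge_poset W x y = (merge_blocks x y ` fst W,
     \<lambda>A B. \<exists>u\<in>fst W. \<exists>v\<in>fst W. merge_blocks x y u = A \<and> merge_blocks x y v = B \<and> snd W u v)"

lemma beta_step_merge_poset:
  assumes "x \<in> fst W" and "y \<in> fst W" and "x \<noteq> y" and "\<forall>z. imm_succ W x z \<longleftrightarrow> imm_succ W y z"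
  shows "beta_step W (merge_poset W x y) (merge_blocks x y)"
  using assms unfolding beta_step_def merge_poset_def by (auto simp: merge_blocks_def [abs_def])

lemma card_merge_poset_less:
  assumes "finite (fst W)" and "x \<in> fst W" and "y \<in> fst W" and "x \<noteq> y"
  shows "card (fst (merge_poset W x y)) < card (fst W)"
proof -
  have "\<not> inj_on (merge_blocks x y) (fst W)"
    using assms(2-4) by (auto simp: inj_on_def merge_blocks_def)
  then have "card (merge_blocks x y ` fst W) \<noteq> card (fst W)"
    using eq_card_imp_inj_on[OF assms(1)] by blast
  then show ?thesis
    unfolding merge_poset_def fst_conv using card_image_le[OF assms(1)] le_neq_implies_less by blast
qed

lemma mem_merge_blocks_image:
  assumes "x \<in> fst W" and "y \<in> fst W" and "A \<in> merge_blocks x y ` fst W"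
  shows "a \<in> A \<longleftrightarrow> (\<exists>C\<in>fst W. merge_blocks x y C = A \<and> a \<in> C)"
  using assms by (auto simp: merge_blocks_def)

lemma block_order_merge_poset:
  assumes "block_order le W" and "x \<in> fst W" and "y \<in> fst W"
  shows "block_order le (merge_poset W x y)"
  unfolding block_order_def
proof (intro ballI)
  fix A B assume "A \<in> fst (merge_poset W x y)" "B \<in> fst (merge_poset W x y)"
  then have A: "a \<in> A \<longleftrightarrow> (\<exists>C\<in>fst W. merge_blocks x y C = A \<and> a \<in> C)"
    and B: "b \<in> B \<longleftrightarrow> (\<exists>C\<in>fst W. merge_blocks x y C = B \<and> b \<in> C)" for a b
    using mem_merge_blocks_image[OF assms(2,3)] by (auto simp: merge_poset_def)
  show "snd (merge_poset W x y) A B \<longleftrightarrow> (\<exists>a\<in>A. \<exists>b\<in>B. le a b)"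
  proof
    assume "snd (merge_poset W x y) A B"
    then obtain C D where "C \<in> fst W" "D \<in> fst W" "merge_blocks x y C = A" "merge_blocks x y D = B"
      "snd W C D"
      by (auto simp: merge_poset_def)
    then show "\<exists>a\<in>A. \<exists>b\<in>B. le a b"
      using block_orderD[OF assms(1)] A B by blast
  next
    assume "\<exists>a\<in>A. \<exists>b\<in>B. le a b"
    then obtain a b C D where "C \<in> fst W" "D \<in> fst W" "merge_blocks x y C = A" "merge_blocks x y D = B"
      "a \<in> C" "b \<in> D" "le a b"
      using A B by meson
    then show "snd (merge_poset W x y) A B"
      using block_orderD[OF assms(1)] by (auto simp: merge_poset_def)
  qed
qed

inductive beta_chain :: "'a fposet \<Rightarrow> 'a fposet list \<Rightarrow> ('a set \<Rightarrow> 'a set) list \<Rightarrow> bool"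
  for W0 :: "'a fposet" where
  start: "beta_chain W0 [W0] []"
| extend: "beta_chain W0 Ws fs \<Longrightarrow> beta_step (last Ws) W f \<Longrightarrow> beta_chain W0 (Ws @ [W]) (fs @ [f])"

lemma beta_chain_nth:
  assumes "beta_chain W0 Ws fs"
  shows "length Ws = length fs + 1 \<and> Ws ! 0 = W0 \<and>
    (\<forall>i<length fs. beta_step (Ws ! i) (Ws ! (i + 1)) (fs ! i))"
  using assms
proof (induction rule: beta_chain.induct)
  case (extend Ws fs W f)
  then have "Ws \<noteq> []"
    by auto
  with extend.IH have "last Ws = Ws ! length fs"
    by (simp add: last_conv_nth)
  with extend show ?case
    by (auto simp: nth_append less_Suc_eq)
qed simp

lemma compose_all_snoc: "compose_all (fs @ [f]) = f \<circ> compose_all fs"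
  unfolding compose_all_def by simp

section \<open>Active indices and admissible colors\<close>

lemma card_set_bit_double_le:
  assumes "finite K" and "K' \<subseteq> K" and "\<forall>l\<in>K'. b < length l \<and> \<not> l ! b \<and> l[b := True] \<in> K"
  shows "2 * card K' \<le> card K"
proof -
  let ?set = "\<lambda>l::bool list. l[b := True]"
  have "finite K'"
    using assms(1,2) finite_subset by blast
  have "inj_on ?set K'"
  proof (rule inj_on_inverseI)
    fix l assume "l \<in> K'"
    then show "(l[b := True])[b := False] = l"
      using assms(3) by (simp add: list_update_same_conv)
  qed
  moreover have "K' \<inter> ?set ` K' = {}"
    using assms(3) by auto
  ultimately have "card (K' \<union> ?set ` K') = 2 * card K'"
    using \<open>finite K'\<close> by (simp add: card_Un_disjoint card_image)
  moreover have "K' \<union> ?set ` K' \<subseteq> K"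
    using assms(2,3) by auto
  ultimately show ?thesis
    using card_mono[OF assms(1)] by metis
qed

locale colored_subspace =
  fixes n :: nat and V :: "yelt set" and c :: "yelt \<Rightarrow> bool list"
  assumes E_subspace: "E_subspace n V" and finite_V: "finite V" and coloring: "weak_coloring n V c"
begin

lemma upward_closed_Ycar: "u \<in> V \<Longrightarrow> w \<in> Ycar n \<Longrightarrow> leY n u w \<Longrightarrow> w \<in> V"
  using E_subspace unfolding E_subspace_def by blast

lemma Bot_notin_V: "Bot \<notin> V"
proof
  assume "Bot \<in> V"
  then have "Y m 0 \<in> V" for m
    using upward_closed_Ycar[of Bot "Y m 0"] by (simp add: leY_def Ycar_def)
  moreover have "inj (\<lambda>m. Y m 0)"
    by (simp add: inj_def)
  ultimately show False
    using finite_V infinite_iff_countable_subset by blast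
qed

lemma V_elemE:
  assumes "u \<in> V"
  obtains m i where "u = Y m i" and "i \<le> bnd n"
  using assms E_subspace Bot_notin_V
  by (cases u) (auto simp: E_subspace_def closedY_def Ycar_def)

lemma upward_closed: "u \<in> V \<Longrightarrow> leY n u w \<Longrightarrow> w \<in> V"
  using upward_closed_Ycar Bot_notin_V by (cases u) (auto simp: leY_Y_iff Ycar_def)

lemma color_length: "u \<in> V \<Longrightarrow> length (c u) = n"
  using coloring unfolding weak_coloring_def by blast

lemma color_mono: "u \<in> V \<Longrightarrow> v \<in> V \<Longrightarrow> leY n u v \<Longrightarrow> list_all2 (\<le>) (c u) (c v)"
  using coloring unfolding weak_coloring_def by blast

definition full_level :: "nat \<Rightarrow> bool" where
  "full_level m \<longleftrightarrow> (\<forall>i\<le>bnd n. Y m i \<in> V)"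

lemma full_levelD: "full_level m \<Longrightarrow> i \<le> bnd n \<Longrightarrow> Y m i \<in> V"
  unfolding full_level_def by blast

lemma full_level_Suc: "full_level (Suc m) \<Longrightarrow> full_level m"
  unfolding full_level_def
proof (intro allI impI)
  fix j assume full: "\<forall>i\<le>bnd n. Y (Suc m) i \<in> V" and "j \<le> bnd n"
  define i where "i = (if j = 0 then 1 else 0::nat)"
  have "i \<le> bnd n" "i \<noteq> j"
    using one_le_bnd[of n] by (auto simp: i_def)
  then show "Y m j \<in> V"
    using upward_closed[of "Y (Suc m) i" "Y m j"] full \<open>j \<le> bnd n\<close> by (simp add: leY_Suc_iff)
qed

primrec active :: "nat \<Rightarrow> nat set" where
  "active 0 = {..bnd n}"
| "active (Suc m) = {i \<in> active m. \<exists>j\<in>active m. j \<noteq> i \<and> c (Y m j) = c (Y m i)}"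

fun admissible_colors :: "nat \<Rightarrow> bool list set" where
  "admissible_colors 0 = {l. length l = n}"
| "admissible_colors (Suc m) = {l. length l = n \<and> (\<forall>k\<le>bnd n. list_all2 (\<le>) l (c (Y m k)))}"

lemma active_subset: "active m \<subseteq> {..bnd n}"
  by (induction m) auto

lemma finite_active: "finite (active m)"
  using active_subset finite_subset by blast

lemma active_in_V: "full_level m \<Longrightarrow> i \<in> active m \<Longrightarrow> Y m i \<in> V"
  using active_subset full_levelD by blast

lemma finite_admissible_colors: "finite (admissible_colors m)"
proof (rule finite_subset)
  show "admissible_colors m \<subseteq> {l. set l \<subseteq> UNIV \<and> length l = n}"
    by (cases m) auto
qed (use finite_lists_length_eq[of "UNIV :: bool set" n] in simp)

lemma admissible_colors_down:
  "list_all2 (\<le>) l k \<Longrightarrow> k \<in> admissible_colors m \<Longrightarrow> l \<in> admissible_colors m"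
  by (cases m) (auto dest: list_all2_lengthD intro: list_all2_trans[of "(\<le>)" "(\<le>)" "(\<le>)", OF order_trans])

lemma replicate_False_admissible: "full_level m \<Longrightarrow> replicate n False \<in> admissible_colors m"
proof (cases m)
  case (Suc m')
  assume "full_level m"
  then have "full_level m'"
    using Suc full_level_Suc by blast
  then show ?thesis
    using Suc by (auto simp: list_all2_conv_all_nth color_length full_levelD)
qed simp

lemma color_admissible:
  assumes "full_level m" and "i \<in> active m"
  shows "c (Y m i) \<in> admissible_colors m"
proof (cases m)
  case 0
  then show ?thesis
    using assms active_subset by (auto simp: color_length full_levelD)
next
  case (Suc m')
  with assms(2) obtain j where j: "i \<in> active m'" "j \<in> active m'" "j \<noteq> i" "c (Y m' j) = c (Y m' i)"
    by auto
  have i: "i \<le> bnd n" and "j \<le> bnd n"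
    using j active_subset by auto
  have V: "Y m i \<in> V" "\<And>k. k \<le> bnd n \<Longrightarrow> Y m' k \<in> V"
    using assms(1) i Suc full_level_Suc by (auto simp: full_levelD)
  have "list_all2 (\<le>) (c (Y m i)) (c (Y m' k))" if "k \<le> bnd n" for k
  proof (cases "k = i")
    case True
    then show ?thesis
      using color_mono[of "Y m i" "Y m' j"] V Suc i j \<open>j \<le> bnd n\<close> by (simp add: leY_Suc_iff)
  next
    case False
    then show ?thesis
      using color_mono[of "Y m i" "Y m' k"] V Suc i that by (simp add: leY_Suc_iff)
  qed
  then show ?thesis
    using Suc color_length[OF V(1)] by simp
qed

lemma admissible_colors_set_bit:
  assumes "l \<in> admissible_colors m" and "q \<in> admissible_colors m" and "b < n" and "q ! b"
  shows "l[b := True] \<in> admissible_colors m"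
proof (cases m)
  case (Suc m')
  have "list_all2 (\<le>) (l[b := True]) (c (Y m' k))" if "k \<le> bnd n" for k
  proof -
    have "list_all2 (\<le>) l (c (Y m' k))" and "list_all2 (\<le>) q (c (Y m' k))"
      using assms(1,2) that Suc by auto
    then show ?thesis
      using assms(1,3,4) Suc unfolding list_all2_conv_all_nth
      by (intro conjI allI impI) (auto simp: nth_list_update split: if_split_asm)
  qed
  then show ?thesis
    using assms(1) Suc by simp
qed (use assms in simp)

lemma admissible_colors_Suc_subset:
  assumes "full_level m" and "i \<in> active m"
  shows "admissible_colors (Suc m) \<subseteq> admissible_colors m"
proof
  fix l assume "l \<in> admissible_colors (Suc m)"
  then have "list_all2 (\<le>) l (c (Y m i))"
    using assms(2) active_subset by auto
  then show "l \<in> admissible_colors m"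
    using admissible_colors_down color_admissible[OF assms] by blast
qed

lemma admissible_colors_Suc_halves_at:
  assumes "full_level m" and "i \<in> active m" and "j \<in> active m" and "b < n"
    and "\<not> c (Y m i) ! b" and "c (Y m j) ! b"
  shows "2 * card (admissible_colors (Suc m)) \<le> card (admissible_colors m)"
proof (rule card_set_bit_double_le[OF finite_admissible_colors
      admissible_colors_Suc_subset[OF assms(1,2)]])
  show "\<forall>l\<in>admissible_colors (Suc m). b < length l \<and> \<not> l ! b \<and> l[b := True] \<in> admissible_colors m"
  proof
    fix l assume l: "l \<in> admissible_colors (Suc m)"
    then have "list_all2 (\<le>) l (c (Y m i))"
      using assms(2) active_subset by auto
    then have "\<not> l ! b"
      using assms(4,5) l by (auto simp: list_all2_conv_all_nth)
    moreover have "l[b := True] \<in> admissible_colors m"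
      using admissible_colors_set_bit[OF _ color_admissible[OF assms(1,3)] assms(4,6)]
        admissible_colors_Suc_subset[OF assms(1,2)] l by blast
    ultimately show "b < length l \<and> \<not> l ! b \<and> l[b := True] \<in> admissible_colors m"
      using l assms(4) by simp
  qed
qed

lemma admissible_colors_Suc_halves:
  assumes "full_level m" and "i \<in> active m" and "j \<in> active m" and "c (Y m i) \<noteq> c (Y m j)"
  shows "2 * card (admissible_colors (Suc m)) \<le> card (admissible_colors m)"
proof -
  have "length (c (Y m i)) = n" "length (c (Y m j)) = n"
    using assms(1-3) active_in_V color_length by blast+
  then obtain b where b: "b < n" "c (Y m i) ! b \<noteq> c (Y m j) ! b"
    using assms(4) by (auto simp: list_eq_iff_nth_eq)
  show ?thesis
  proof (cases "c (Y m i) ! b")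
    case True
    then show ?thesis
      using admissible_colors_Suc_halves_at[OF assms(1,3,2) b(1)] b(2) by simp
  next
    case False
    then show ?thesis
      using admissible_colors_Suc_halves_at[OF assms(1-3) b(1)] b(2) by simp
  qed
qed

lemma active_color_collision:
  assumes "full_level m" and "2 * card (admissible_colors m) \<le> card (active m)"
  shows "\<exists>i\<in>active m. \<exists>j\<in>active m. i \<noteq> j \<and> c (Y m i) = c (Y m j)"
proof (rule ccontr)
  assume "\<not> ?thesis"
  then have "inj_on (\<lambda>i. c (Y m i)) (active m)"
    by (auto simp: inj_on_def)
  then have "card (active m) \<le> card (admissible_colors m)"
    using card_inj_on_le color_admissible[OF assms(1)] finite_admissible_colors by blast
  moreover have "card (admissible_colors m) > 0"
    using replicate_False_admissible[OF assms(1)] finite_admissible_colors card_gt_0_iff by blast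
  ultimately show False
    using assms(2) by linarith
qed

lemma retiring_color_unique:
  "u \<in> active m - active (Suc m) \<Longrightarrow> j \<in> active m \<Longrightarrow> j \<noteq> u \<Longrightarrow> c (Y m j) \<noteq> c (Y m u)"
  by auto

lemma card_retiring_less_admissible:
  assumes full: "full_level m" and i: "i \<in> active m" "j \<in> active m" "i \<noteq> j" "c (Y m i) = c (Y m j)"
  shows "card (active m - active (Suc m)) < card (admissible_colors m)"
proof -
  let ?U = "active m - active (Suc m)"
  have "c (Y m u) \<noteq> c (Y m i)" if "u \<in> ?U" for u
    using retiring_color_unique[OF that i(1)] retiring_color_unique[OF that i(2)] i(3,4)
    by (cases "u = i") auto
  then have "(\<lambda>u. c (Y m u)) ` ?U \<subseteq> admissible_colors m - {c (Y m i)}"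
    using color_admissible[OF full] by auto
  moreover have "inj_on (\<lambda>u. c (Y m u)) ?U"
    by (rule inj_onI) (use retiring_color_unique in blast)
  ultimately have "card ?U \<le> card (admissible_colors m - {c (Y m i)})"
    by (intro card_inj_on_le[OF _ _ finite_Diff[OF finite_admissible_colors]])
  also have "\<dots> < card (admissible_colors m)"
    by (rule card_Diff1_less[OF finite_admissible_colors color_admissible[OF full i(1)]])
  finally show ?thesis .
qed

lemma two_card_admissible_le_active_Suc:
  assumes full: "full_level m" and IH: "2 * card (admissible_colors m) \<le> card (active m)"
  shows "2 * card (admissible_colors (Suc m)) \<le> card (active (Suc m))"
proof -
  obtain i j where ij: "i \<in> active m" "j \<in> active m" "i \<noteq> j" "c (Y m i) = c (Y m j)"
    using active_color_collision[OF assms] by blast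
  let ?U = "active m - active (Suc m)"
  have sub: "active (Suc m) \<subseteq> active m"
    by auto
  then have "card ?U = card (active m) - card (active (Suc m))"
    using finite_active by (intro card_Diff_subset) (auto intro: finite_subset)
  then have card_active_Suc: "card (active (Suc m)) = card (active m) - card ?U"
    using card_mono[OF finite_active sub] by linarith
  show ?thesis
  proof (cases "?U = {}")
    case True
    then have "active (Suc m) = active m"
      using sub by blast
    then show ?thesis
      using IH card_mono[OF finite_admissible_colors admissible_colors_Suc_subset[OF full ij(1)]]
      by simp
  next
    case False
    then obtain u where u: "u \<in> ?U"
      by blast
    then have "c (Y m u) \<noteq> c (Y m i)"
      using retiring_color_unique[OF u ij(1)] retiring_color_unique[OF u ij(2)] ij(3,4)
      by (cases "u = i") auto
    then have "2 * card (admissible_colors (Suc m)) \<le> card (admissible_colors m)"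
      using u by (intro admissible_colors_Suc_halves[OF full _ ij(1)]) auto
    then show ?thesis
      using card_active_Suc IH card_retiring_less_admissible[OF full ij] by linarith
  qed
qed

lemma two_card_admissible_le_active:
  "full_level m \<Longrightarrow> 2 * card (admissible_colors m) \<le> card (active m)"
proof (induction m)
  case 0
  have "card (admissible_colors 0) = 2 ^ n"
    using card_lists_length_eq[of "UNIV :: bool set" n] by simp
  then show ?case
    using Suc_bnd[of n] by simp
next
  case (Suc m)
  then show ?case
    using full_level_Suc two_card_admissible_le_active_Suc by blast
qed

lemma full_level_color_collision:
  "full_level m \<Longrightarrow> \<exists>i\<in>active m. \<exists>j\<in>active m. i \<noteq> j \<and> c (Y m i) = c (Y m j)"
  using active_color_collision two_card_admissible_le_active by blast

section \<open>Merging level by level\<close>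

definition final_equiv :: "yelt \<Rightarrow> yelt \<Rightarrow> bool" where
  "final_equiv u v \<longleftrightarrow> u = v \<or>
     (\<exists>m i j. u = Y m i \<and> v = Y m j \<and> full_level m \<and> i \<in> active m \<and> j \<in> active m \<and> c u = c v)"

definition final_class :: "yelt \<Rightarrow> yelt set" where
  "final_class u = {v \<in> V. final_equiv u v}"

lemma final_class_self: "u \<in> V \<Longrightarrow> u \<in> final_class u"
  by (simp add: final_class_def final_equiv_def)

lemma final_class_subset: "final_class u \<subseteq> V"
  by (auto simp: final_class_def)

lemma final_equiv_sym: "final_equiv u v \<Longrightarrow> final_equiv v u"
  unfolding final_equiv_def by metis

lemma final_equiv_trans: "final_equiv u v \<Longrightarrow> final_equiv v w \<Longrightarrow> final_equiv u w"
  unfolding final_equiv_def by (elim disjE exE conjE) auto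

lemma final_class_eq: "v \<in> final_class u \<Longrightarrow> final_class v = final_class u"
  unfolding final_class_def using final_equiv_sym final_equiv_trans by blast

lemma level_final_class: "v \<in> final_class u \<Longrightarrow> level v = level u"
  unfolding final_class_def final_equiv_def by auto

lemma color_final_class: "v \<in> final_class u \<Longrightarrow> c v = c u"
  unfolding final_class_def final_equiv_def by auto

lemma color_eq_of_final_class_eq:
  assumes "v \<in> V" and "final_class u = final_class v"
  shows "c u = c v"
  using color_final_class[of v u] final_class_self[OF assms(1)] assms(2) by simp

lemma final_classE:
  assumes "v \<in> final_class u" and "v \<noteq> u"
  obtains m i j where "u = Y m i" "v = Y m j" "full_level m" "i \<in> active m" "j \<in> active m"
  using assms unfolding final_class_def final_equiv_def by auto

lemma active_final_class:
  assumes "full_level m" and "i \<in> active m" and "j \<in> active m" and "c (Y m i) = c (Y m j)"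
  shows "Y m j \<in> final_class (Y m i)"
  using assms active_in_V unfolding final_class_def final_equiv_def by blast

lemma active_Suc_partner:
  assumes "full_level (Suc m)" and "i \<in> active (Suc m)"
  obtains j where "j \<noteq> i" "Y m j \<in> final_class (Y m i)"
proof -
  obtain j where "i \<in> active m" "j \<in> active m" "j \<noteq> i" "c (Y m j) = c (Y m i)"
    using assms(2) by auto
  with full_level_Suc[OF assms(1)] that show ?thesis
    using active_final_class by metis
qed

lemma full_level_final_class_pair:
  assumes "full_level m"
  shows "\<exists>i j. i < j \<and> j \<le> bnd n \<and> final_class (Y m i) = final_class (Y m j)"
proof -
  obtain i j where ij: "i \<in> active m" "j \<in> active m" "i \<noteq> j" "c (Y m i) = c (Y m j)"
    using full_level_color_collision[OF assms] by blast
  then have "final_class (Y m i) = final_class (Y m j)"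
    using active_final_class[OF assms] final_class_eq by metis
  moreover have "i \<le> bnd n" "j \<le> bnd n"
    using ij(1,2) active_subset by auto
  ultimately show ?thesis
    using ij(3) by (metis linorder_neqE_nat)
qed

text \<open>In the quotient \<open>W\<close> of \<open>V\<close> reached so far, \<open>F {u}\<close> is the block of \<open>u\<close>; blocks are
  merged level by level, starting from the top level \<open>0\<close>.\<close>

definition refining_blocks :: "(yelt set \<Rightarrow> yelt set) \<Rightarrow> bool" where
  "refining_blocks F \<longleftrightarrow> (\<forall>u\<in>V. u \<in> F {u} \<and> F {u} \<subseteq> final_class u \<and> (\<forall>v\<in>F {u}. F {v} = F {u}))"

definition merged_top_down :: "(yelt set \<Rightarrow> yelt set) \<Rightarrow> bool" where
  "merged_top_down F \<longleftrightarrow> (\<forall>u\<in>V. F {u} \<noteq> {u} \<longrightarrow> (\<forall>w\<in>V. level w < level u \<longrightarrow> F {w} = final_class w))"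

context
  fixes F assumes refining: "refining_blocks F"
begin

lemma refining_blocks_self: "u \<in> V \<Longrightarrow> u \<in> F {u}"
  using refining unfolding refining_blocks_def by blast

lemma refining_blocks_final: "u \<in> V \<Longrightarrow> F {u} \<subseteq> final_class u"
  using refining unfolding refining_blocks_def by blast

lemma refining_blocks_block_eq: "u \<in> V \<Longrightarrow> v \<in> F {u} \<Longrightarrow> F {v} = F {u}"
  using refining unfolding refining_blocks_def by blast

lemma refining_blocks_mem:
  assumes "u \<in> V" and "v \<in> F {u}"
  shows "v \<in> V \<and> F {v} = F {u} \<and> level v = level u"
proof -
  have "v \<in> final_class u"
    using refining_blocks_final assms by blast
  then show ?thesis
    using refining_blocks_block_eq[OF assms] final_class_subset level_final_class by blast
qed

lemma final_class_of_merged: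
  assumes "u \<in> V" and "v \<in> final_class u" and "w \<in> V" and "F {w} = F {u} \<or> F {w} = F {v}"
  shows "final_class w = final_class u"
proof -
  have "v \<in> V"
    using assms(2) final_class_subset by blast
  then have "w \<in> final_class u \<or> w \<in> final_class v"
    using assms refining_blocks_self[OF assms(3)] refining_blocks_final by blast
  then show ?thesis
    using final_class_eq[OF assms(2)] final_class_eq by metis
qed

lemma merge_blocks_settled_block:
  assumes u: "u \<in> V" and v: "v \<in> final_class u" and ne: "F {u} \<noteq> F {v}"
    and w: "w \<in> V" "F {w} = final_class w"
  shows "merge_blocks (F {u}) (F {v}) (F {w}) = F {w}"
proof -
  have "v \<in> V"
    using v final_class_subset by blast
  have "\<not> (F {w} = F {u} \<or> F {w} = F {v})"
  proof
    assume "F {w} = F {u} \<or> F {w} = F {v}"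
    then have "final_class w = final_class u"
      by (rule final_class_of_merged[OF u v w(1)])
    then have "u \<in> F {w}" "v \<in> F {w}"
      using w(2) final_class_self[OF u] v by auto
    then show False
      using refining_blocks_block_eq[OF w(1)] ne by metis
  qed
  then show ?thesis
    by (simp add: merge_blocks_def)
qed

lemma refining_blocks_merge:
  assumes u: "u \<in> V" and v: "v \<in> final_class u"
  shows "refining_blocks (merge_blocks (F {u}) (F {v}) \<circ> F)"
  unfolding refining_blocks_def
proof
  fix w assume w: "w \<in> V"
  define f where "f = merge_blocks (F {u}) (F {v})"
  have "v \<in> V"
    using v final_class_subset by blast
  show "w \<in> (f \<circ> F) {w} \<and> (f \<circ> F) {w} \<subseteq> final_class w \<and> (\<forall>w'\<in>(f \<circ> F) {w}. (f \<circ> F) {w'} = (f \<circ> F) {w})"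
    unfolding f_def[symmetric]
  proof (cases "F {w} = F {u} \<or> F {w} = F {v}")
    case True
    have "(f \<circ> F) {w'} = F {u} \<union> F {v}" if "F {w'} = F {u} \<or> F {w'} = F {v}" for w'
      using that by (auto simp: f_def merge_blocks_def)
    moreover have "F {w'} = F {u} \<or> F {w'} = F {v}" if "w' \<in> F {u} \<union> F {v}" for w'
      using that refining_blocks_block_eq u \<open>v \<in> V\<close> by blast
    moreover have "F {u} \<union> F {v} \<subseteq> final_class w"
      using refining_blocks_final u \<open>v \<in> V\<close> final_class_eq[OF v] final_class_of_merged[OF u v w True]
      by auto
    ultimately show ?thesis
      using True refining_blocks_self[OF w] by auto
  next
    case False
    then have fw: "f (F {w}) = F {w}"
      by (simp add: f_def merge_blocks_def)
    then have "f (F {w'}) = F {w}" if "w' \<in> F {w}" for w'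
      using refining_blocks_block_eq[OF w that] by simp
    then show ?thesis
      unfolding comp_apply fw using refining_blocks_self[OF w] refining_blocks_final[OF w] by blast
  qed
qed

lemma merged_top_down_merge:
  assumes top_down: "merged_top_down F" and u: "u \<in> V" and v: "v \<in> final_class u" and ne: "F {u} \<noteq> F {v}"
    and settled: "\<forall>w\<in>V. level w < level u \<longrightarrow> F {w} = final_class w"
  shows "merged_top_down (merge_blocks (F {u}) (F {v}) \<circ> F)"
  unfolding merged_top_down_def
proof (intro ballI impI)
  fix w w' assume w: "w \<in> V" "(merge_blocks (F {u}) (F {v}) \<circ> F) {w} \<noteq> {w}"
    and w': "w' \<in> V" "level w' < level w"
  have "F {w'} = final_class w'"
  proof (cases "F {w} = F {u} \<or> F {w} = F {v}")
    case True
    then have "w \<in> final_class u"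
      using final_class_of_merged[OF u v w(1)] final_class_self[OF w(1)] by simp
    then show ?thesis
      using settled w' level_final_class by simp
  next
    case False
    then have "F {w} \<noteq> {w}"
      using w(2) by (simp add: merge_blocks_def)
    then show ?thesis
      using top_down w(1) w' unfolding merged_top_down_def by blast
  qed
  then show "(merge_blocks (F {u}) (F {v}) \<circ> F) {w'} = final_class w'"
    using merge_blocks_settled_block[OF u v ne w'(1)] by simp
qed

end

definition partial_merge :: "yelt fposet \<Rightarrow> (yelt set \<Rightarrow> yelt set) \<Rightarrow> bool" where
  "partial_merge W F \<longleftrightarrow> fst W = (\<lambda>u. F {u}) ` V \<and> block_order (leY n) W \<and>
     refining_blocks F \<and> merged_top_down F"

lemma partial_merge_initial: "partial_merge (initial n V) id"
  unfolding partial_merge_def refining_blocks_def merged_top_down_def initial_def block_order_def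
  using final_class_self by simp

context
  fixes W F assumes pm: "partial_merge W F"
begin

lemma partial_merge_carrier: "fst W = (\<lambda>u. F {u}) ` V"
  using pm unfolding partial_merge_def by blast

lemma partial_merge_block_order: "block_order (leY n) W"
  using pm unfolding partial_merge_def by blast

lemmas partial_merge_order = block_orderD[OF partial_merge_block_order]

lemma partial_merge_refining: "refining_blocks F"
  using pm unfolding partial_merge_def by blast

lemmas partial_merge_self = refining_blocks_self[OF partial_merge_refining]
  and partial_merge_final = refining_blocks_final[OF partial_merge_refining]
  and partial_merge_mem = refining_blocks_mem[OF partial_merge_refining]

lemma partial_merge_blockE:
  assumes "A \<in> fst W"
  obtains u where "u \<in> V" "A = F {u}"
  using assms partial_merge_carrier by blast

lemma partial_merge_level_eq:
  assumes "A \<in> fst W" and "a \<in> A" and "b \<in> A"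
  shows "level a = level b"
proof -
  obtain u where "u \<in> V" "A = F {u}"
    using assms(1) by (rule partial_merge_blockE)
  then show ?thesis
    using partial_merge_mem[of u a] partial_merge_mem[of u b] assms(2,3) by simp
qed

lemma partial_merge_le_level:
  assumes "A \<in> fst W" "B \<in> fst W" "A \<noteq> B" "a \<in> A" "b \<in> B" "leY n a b"
  shows "level b < level a"
proof -
  obtain u v where "u \<in> V" "A = F {u}" "v \<in> V" "B = F {v}"
    using assms(1,2) partial_merge_blockE by metis
  then have "a \<in> V" "b \<in> V" "F {a} = A" "F {b} = B"
    using assms(4,5) partial_merge_mem[of u a] partial_merge_mem[of v b] by simp_all
  then show ?thesis
    using leY_level[OF assms(6)] Bot_notin_V assms(3) by auto
qed

lemma imm_succ_next_level:
  assumes x: "x \<in> V" and imm: "imm_succ W (F {x}) Z"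
  shows "Z \<in> fst W \<and> (\<exists>a\<in>F {x}. \<exists>b\<in>Z. leY n a b \<and> Suc (level b) = level x)"
proof -
  have X: "F {x} \<in> fst W"
    using x partial_merge_carrier by blast
  have Z: "Z \<in> fst W" and "snd W (F {x}) Z" and XZ: "F {x} \<noteq> Z"
    using imm unfolding imm_succ_def by auto
  then obtain a b where ab: "a \<in> F {x}" "b \<in> Z" "leY n a b"
    using partial_merge_order[OF X Z] by blast
  have "a \<in> V" and level_a: "level a = level x"
    using partial_merge_mem[OF x ab(1)] by auto
  have "level b < level a"
    by (rule partial_merge_le_level[OF X Z XZ ab])
  moreover have "\<not> Suc (level b) < level a"
  proof
    assume lt: "Suc (level b) < level a"
    obtain m' i where "a = Y m' i"
      using \<open>a \<in> V\<close> by (rule V_elemE)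
    with lt obtain m where a: "a = Y (Suc m) i" and "level b < m"
      by (cases m') auto
    with ab(3) obtain k where k: "leY n a (Y m k)" "leY n (Y m k) b"
      by (auto elim: leY_through_level)
    define M where "M = F {Y m k}"
    have "Y m k \<in> V"
      using upward_closed[OF \<open>a \<in> V\<close> k(1)] .
    then have M: "M \<in> fst W" "Y m k \<in> M"
      using partial_merge_carrier partial_merge_self by (auto simp: M_def)
    have "M \<noteq> F {x}"
      using partial_merge_level_eq[OF X ab(1), of "Y m k"] a M(2) by auto
    moreover have "M \<noteq> Z"
      using partial_merge_level_eq[OF M, of b] ab(2) \<open>level b < m\<close> by auto
    moreover have "snd W (F {x}) M" "snd W M Z"
      using partial_merge_order[OF X M(1)] partial_merge_order[OF M(1) Z] ab k M(2) by blast+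
    ultimately show False
      using imm M(1) unfolding imm_succ_def by blast
  qed
  ultimately have "Suc (level b) = level x"
    using level_a by simp
  then show ?thesis
    using Z ab by blast
qed

lemma imm_succI:
  assumes x: "x \<in> V" and Z: "Z \<in> fst W" and ab: "a \<in> F {x}" "b \<in> Z" "leY n a b"
    and level_b: "Suc (level b) = level x"
  shows "imm_succ W (F {x}) Z"
proof -
  have X: "F {x} \<in> fst W"
    using x partial_merge_carrier by blast
  have level_X: "level a' = level x" if "a' \<in> F {x}" for a'
    using partial_merge_mem[OF x that] by simp
  have level_Z: "level d = level b" if "d \<in> Z" for d
    using partial_merge_level_eq[OF Z that ab(2)] .
  have "snd W (F {x}) Z"
    using partial_merge_order[OF X Z] ab by blast
  moreover have "F {x} \<noteq> Z"
    using level_X[of b] ab(2) level_b by auto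
  moreover have "\<not> (snd W (F {x}) M \<and> snd W M Z \<and> M \<noteq> F {x} \<and> M \<noteq> Z)" if M: "M \<in> fst W" for M
  proof
    assume "snd W (F {x}) M \<and> snd W M Z \<and> M \<noteq> F {x} \<and> M \<noteq> Z"
    then obtain a' e e' d where "a' \<in> F {x}" "e \<in> M" "e' \<in> M" "d \<in> Z"
      "level e < level a'" "level d < level e'"
      using partial_merge_order[OF X M] partial_merge_order[OF M Z]
        partial_merge_le_level[OF X M] partial_merge_le_level[OF M Z] by metis
    moreover have "level e = level e'"
      using partial_merge_level_eq[OF M] \<open>e \<in> M\<close> \<open>e' \<in> M\<close> by blast
    ultimately show False
      using level_X[OF \<open>a' \<in> F {x}\<close>] level_Z[OF \<open>d \<in> Z\<close>] level_b by simp
  qed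
  ultimately show ?thesis
    unfolding imm_succ_def using Z by blast
qed

lemma imm_succ_active_iff:
  assumes "full_level m" and "i \<in> active m"
    and settled: "\<forall>w\<in>V. level w < m \<longrightarrow> F {w} = final_class w"
  shows "imm_succ W (F {Y m i}) Z \<longleftrightarrow> Z \<in> fst W \<and> (\<exists>z\<in>Z. Suc (level z) = m)"
proof
  have x: "Y m i \<in> V"
    using active_in_V[OF assms(1,2)] .
  show "Z \<in> fst W \<and> (\<exists>z\<in>Z. Suc (level z) = m)" if "imm_succ W (F {Y m i}) Z"
    using imm_succ_next_level[OF x that] by auto
  assume "Z \<in> fst W \<and> (\<exists>z\<in>Z. Suc (level z) = m)"
  then obtain z m' where Z: "Z \<in> fst W" "z \<in> Z" "level z = m'" and m: "m = Suc m'"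
    by auto
  obtain u where "u \<in> V" "Z = F {u}"
    using Z(1) by (rule partial_merge_blockE)
  then have "z \<in> V" and Fz: "F {z} = Z"
    using partial_merge_mem[of u z] Z(2) by auto
  then obtain k where z: "z = Y m' k" "k \<le> bnd n"
    using V_elemE[OF \<open>z \<in> V\<close>] Z(3) by (metis level.simps(2))
  have "i \<le> bnd n"
    using assms(2) active_subset by auto
  have "\<exists>b\<in>Z. leY n (Y m i) b \<and> level b = m'"
  proof (cases "k = i")
    case False
    then show ?thesis
      using z Z(2,3) \<open>i \<le> bnd n\<close> m by (intro bexI[of _ z]) (auto simp: leY_Suc_iff)
  next
    case True
    obtain j where j: "j \<noteq> i" "Y m' j \<in> final_class (Y m' i)"
      using active_Suc_partner assms(1,2) m by blast
    have "F {z} = final_class z"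
      using settled \<open>z \<in> V\<close> Z(3) m by simp
    then have "Y m' j \<in> Z"
      using Fz z True j(2) by simp
    moreover have "leY n (Y m i) (Y m' j)"
      using j final_class_subset \<open>i \<le> bnd n\<close> m by (auto simp: leY_Suc_iff elim: V_elemE)
    ultimately show ?thesis
      by auto
  qed
  then show "imm_succ W (F {Y m i}) Z"
    using imm_succI[OF x Z(1) partial_merge_self[OF x]] m by auto
qed

end

lemma partial_merge_merge:
  assumes pm: "partial_merge W F" and u: "u \<in> V" and v: "v \<in> final_class u" and ne: "F {u} \<noteq> F {v}"
    and settled: "\<forall>w\<in>V. level w < level u \<longrightarrow> F {w} = final_class w"
  shows "partial_merge (merge_poset W (F {u}) (F {v})) (merge_blocks (F {u}) (F {v}) \<circ> F)"
  unfolding partial_merge_def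
proof (intro conjI)
  have "v \<in> V"
    using v final_class_subset by blast
  then have "F {u} \<in> fst W" "F {v} \<in> fst W"
    using partial_merge_carrier[OF pm] u by auto
  then show "block_order (leY n) (merge_poset W (F {u}) (F {v}))"
    using block_order_merge_poset[OF partial_merge_block_order[OF pm]] by blast
  show "fst (merge_poset W (F {u}) (F {v})) = (\<lambda>w. (merge_blocks (F {u}) (F {v}) \<circ> F) {w}) ` V"
    using partial_merge_carrier[OF pm] by (simp add: merge_poset_def image_image)
  show "refining_blocks (merge_blocks (F {u}) (F {v}) \<circ> F)"
    using refining_blocks_merge[OF partial_merge_refining[OF pm] u v] .
  show "merged_top_down (merge_blocks (F {u}) (F {v}) \<circ> F)"
    using merged_top_down_merge[OF partial_merge_refining[OF pm] _ u v ne settled] pm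
    unfolding partial_merge_def by blast
qed

lemma partial_merge_extend:
  assumes pm: "partial_merge W F" and unfinished: "\<exists>u\<in>V. F {u} \<noteq> final_class u"
  obtains W' f where "beta_step W W' f" and "partial_merge W' (f \<circ> F)" and "card (fst W') < card (fst W)"
proof -
  obtain u where u: "u \<in> V" "F {u} \<noteq> final_class u"
    and least: "\<And>w. w \<in> V \<Longrightarrow> F {w} \<noteq> final_class w \<Longrightarrow> level u \<le> level w"
    using ex_has_least_nat[of "\<lambda>u. u \<in> V \<and> F {u} \<noteq> final_class u" _ level] unfinished by blast
  have settled: "\<forall>w\<in>V. level w < level u \<longrightarrow> F {w} = final_class w"
    using least by force
  obtain v where v: "v \<in> final_class u" "v \<notin> F {u}"
    using partial_merge_final[OF pm u(1)] u(2) by blast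
  then have "v \<in> V" and ne: "F {u} \<noteq> F {v}"
    using final_class_subset partial_merge_self[OF pm] by auto
  then have "v \<noteq> u"
    by auto
  with v(1) obtain m i j where ij: "u = Y m i" "v = Y m j" "full_level m" "i \<in> active m" "j \<in> active m"
    by (rule final_classE)
  have "imm_succ W (F {u}) Z \<longleftrightarrow> imm_succ W (F {v}) Z" for Z
    using imm_succ_active_iff[OF pm ij(3,4)] imm_succ_active_iff[OF pm ij(3,5)] settled ij(1,2) by simp
  moreover have "F {u} \<in> fst W" "F {v} \<in> fst W" "finite (fst W)"
    using partial_merge_carrier[OF pm] u(1) \<open>v \<in> V\<close> finite_V by auto
  ultimately show ?thesis
    using that beta_step_merge_poset card_merge_poset_less partial_merge_merge[OF pm u(1) v(1) ne settled] ne
    by blast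
qed

lemma partial_merge_reaches_final:
  assumes "beta_chain W0 Ws fs" and "partial_merge (last Ws) (compose_all fs)"
  shows "\<exists>Ws' fs'. beta_chain W0 Ws' fs' \<and> (\<forall>u\<in>V. compose_all fs' {u} = final_class u)"
  using assms
proof (induction "card (fst (last Ws))" arbitrary: Ws fs rule: less_induct)
  case less
  show ?case
  proof (cases "\<forall>u\<in>V. compose_all fs {u} = final_class u")
    case True
    then show ?thesis
      using less.prems(1) by blast
  next
    case False
    then obtain W f where W: "beta_step (last Ws) W f" "partial_merge W (f \<circ> compose_all fs)"
      "card (fst W) < card (fst (last Ws))"
      using partial_merge_extend[OF less.prems(2)] by blast
    have "beta_chain W0 (Ws @ [W]) (fs @ [f])"
      using less.prems(1) W(1) by (rule beta_chain.extend)
    moreover have "partial_merge (last (Ws @ [W])) (compose_all (fs @ [f]))"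
      using W(2) by (simp add: compose_all_snoc)
    ultimately show ?thesis
      using less.hyps[of "Ws @ [W]" "fs @ [f]"] W(3) by simp
  qed
qed
end

theorem mainTheorem8:
  fixes n :: nat and V :: "yelt set" and c :: "yelt \<Rightarrow> bool list"
  assumes "E_subspace n V" and "finite V" and "weak_coloring n V c"
  shows "\<exists>(k::nat) (Vs :: yelt fposet list) (fs :: (yelt set \<Rightarrow> yelt set) list).
     length Vs = k + 1 \<and> length fs = k \<and> Vs ! 0 = initial n V \<and>
     (\<forall>i<k. beta_step (Vs ! i) (Vs ! (i + 1)) (fs ! i)) \<and>
     (\<forall>u\<in>V. \<forall>v\<in>V. compose_all fs {u} = compose_all fs {v} \<longrightarrow> c u = c v) \<and>
     (\<forall>m. (\<forall>i\<le>bnd n. Y m i \<in> V) \<longrightarrow>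
        (\<exists>i j. i < j \<and> j \<le> bnd n \<and> compose_all fs {Y m i} = compose_all fs {Y m j}))"
proof -
  interpret colored_subspace n V c
    using assms by unfold_locales
  have "partial_merge (last [initial n V]) (compose_all [])"
    using partial_merge_initial by (simp add: compose_all_def)
  then obtain Vs fs where chain: "beta_chain (initial n V) Vs fs"
    and final: "\<forall>u\<in>V. compose_all fs {u} = final_class u"
    using partial_merge_reaches_final[OF beta_chain.start] by blast
  have "c u = c v" if "u \<in> V" "v \<in> V" "compose_all fs {u} = compose_all fs {v}" for u v
    using final that by (intro color_eq_of_final_class_eq[OF that(2)]) simp
  moreover have "\<exists>i j. i < j \<and> j \<le> bnd n \<and> compose_all fs {Y m i} = compose_all fs {Y m j}"
    if full: "\<forall>i\<le>bnd n. Y m i \<in> V" for m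
  proof -
    obtain i j where "i < j" "j \<le> bnd n" "final_class (Y m i) = final_class (Y m j)"
      using full_level_final_class_pair full unfolding full_level_def by blast
    with full final show ?thesis
      by (metis less_imp_le_nat order.trans)
  qed
  ultimately show ?thesis
    using beta_chain_nth[OF chain] by blast
qed

end
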